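(* Let $R$, $G$, $*$, $\sigma$ and $\mathcal{S}$ be as in the context. If $\mathcal{S}$ is anticommutative, then $\operatorname{char}(R)=4$ or $\operatorname{char}(R)=8$.
   Context: Throughout, $R$ is a commutative ring with unity with $\operatorname{char}(R)\neq 2$, and $\mathcal{U}(R)$ is its unit group. $G$ is a group with an involution $*$, i.e. a map $x\mapsto x^*$ with $(xy)^*=y^*x^*$ and $(x^* )^*=x$. The map $\sigma:G\to\mathcal{U}(R)$ is a nontrivial group homomorphism with kernel $N=\ker\sigma$, and it is compatible with $*$: $xx^*\in N$ for all $x\in G$. The group ring $RG$ carries the involution $\left(\sum_{x\in G}\alpha_x x\right)^{\sigma*}=\sum_{x\in G}\sigma(x)\alpha_x x^*$. Write $G_*=\{x\in G: x^*=x\}$ and $N_*=G_*\cap N$. Let $\mathcal{S}$ be the $R$-submodule of $RG$ spanned by the union of the following three sets: - $2\mathcal{S}_1=\{2x: x\in N_*\}$; - $\mathcal{S}_2=\{\alpha x: x\in G_*\setminus N,\ \alpha\in R,\ \alpha(1-\sigma(x))=0\}$; - $\mathcal{S}_3=\{x+\sigma(x)x^*: x\in G\setminus G_*\}$. $\mathcal{S}$ is called anticommutative if $ab+ba=0$ for all $a,b\in\mathcal{S}$. *)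

theory Defs
  imports "HOL-Algebra.Group"
begin

text \<open>Elements of the group ring RG are represented as functions g => r
(coefficient functions) with finite support contained in carrier G.\<close>

definition gr_basis :: "'g \<Rightarrow> ('g \<Rightarrow> 'r::comm_ring_1)" where
  "gr_basis x = (\<lambda>y. if y = x then 1 else 0)"

definition gr_smult :: "'r::comm_ring_1 \<Rightarrow> ('g \<Rightarrow> 'r) \<Rightarrow> ('g \<Rightarrow> 'r)" where
  "gr_smult c f = (\<lambda>y. c * f y)"

definition gr_add :: "('g \<Rightarrow> 'r::comm_ring_1) \<Rightarrow> ('g \<Rightarrow> 'r) \<Rightarrow> ('g \<Rightarrow> 'r)" where
  "gr_add f h = (\<lambda>y. f y + h y)"

definition gr_mult :: "('g, 'b) monoid_scheme \<Rightarrow> ('g \<Rightarrow> 'r::comm_ring_1) \<Rightarrow> ('g \<Rightarrow> 'r) \<Rightarrow> ('g \<Rightarrow> 'r)" where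
  "gr_mult G a b = (\<lambda>z. \<Sum>(x, y) \<in> {(x, y). x \<in> carrier G \<and> y \<in> carrier G \<and> a x \<noteq> 0 \<and> b y \<noteq> 0
                                     \<and> x \<otimes>\<^bsub>G\<^esub> y = z}. a x * b y)"

definition is_involution :: "('g, 'b) monoid_scheme \<Rightarrow> ('g \<Rightarrow> 'g) \<Rightarrow> bool" where
  "is_involution G star \<longleftrightarrow>
     (\<forall>x \<in> carrier G. star x \<in> carrier G) \<and>
     (\<forall>x \<in> carrier G. \<forall>y \<in> carrier G. star (x \<otimes>\<^bsub>G\<^esub> y) = star y \<otimes>\<^bsub>G\<^esub> star x) \<and>
     (\<forall>x \<in> carrier G. star (star x) = x)"

definition unit_hom :: "('g, 'b) monoid_scheme \<Rightarrow> ('g \<Rightarrow> 'r::comm_ring_1) \<Rightarrow> bool" where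
  "unit_hom G \<sigma> \<longleftrightarrow>
     (\<forall>x \<in> carrier G. \<sigma> x dvd 1) \<and>
     (\<forall>x \<in> carrier G. \<forall>y \<in> carrier G. \<sigma> (x \<otimes>\<^bsub>G\<^esub> y) = \<sigma> x * \<sigma> y)"

definition sym_elems :: "('g, 'b) monoid_scheme \<Rightarrow> ('g \<Rightarrow> 'g) \<Rightarrow> 'g set" where
  "sym_elems G star = {x \<in> carrier G. star x = x}"

definition ker_sigma :: "('g, 'b) monoid_scheme \<Rightarrow> ('g \<Rightarrow> 'r::comm_ring_1) \<Rightarrow> 'g set" where
  "ker_sigma G \<sigma> = {x \<in> carrier G. \<sigma> x = 1}"

definition S_gens :: "('g, 'b) monoid_scheme \<Rightarrow> ('g \<Rightarrow> 'g) \<Rightarrow> ('g \<Rightarrow> 'r::comm_ring_1) \<Rightarrow> ('g \<Rightarrow> 'r) set" where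
  "S_gens G star \<sigma> =
     {gr_smult 2 (gr_basis x) | x. x \<in> sym_elems G star \<inter> ker_sigma G \<sigma>}
     \<union> {gr_smult \<alpha> (gr_basis x) | x \<alpha>. x \<in> sym_elems G star - ker_sigma G \<sigma> \<and> \<alpha> * (1 - \<sigma> x) = 0}
     \<union> {gr_add (gr_basis x) (gr_smult (\<sigma> x) (gr_basis (star x))) | x. x \<in> carrier G - sym_elems G star}"

inductive_set gr_span :: "('g \<Rightarrow> 'r::comm_ring_1) set \<Rightarrow> ('g \<Rightarrow> 'r) set" for A where
  zero: "(\<lambda>_. 0) \<in> gr_span A"
| gen: "a \<in> A \<Longrightarrow> a \<in> gr_span A"
| add: "a \<in> gr_span A \<Longrightarrow> b \<in> gr_span A \<Longrightarrow> gr_add a b \<in> gr_span A"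
| smult: "a \<in> gr_span A \<Longrightarrow> gr_smult c a \<in> gr_span A"

definition S_set :: "('g, 'b) monoid_scheme \<Rightarrow> ('g \<Rightarrow> 'g) \<Rightarrow> ('g \<Rightarrow> 'r::comm_ring_1) \<Rightarrow> ('g \<Rightarrow> 'r) set" where
  "S_set G star \<sigma> = gr_span (S_gens G star \<sigma>)"

definition anticommutative :: "('g, 'b) monoid_scheme \<Rightarrow> ('g \<Rightarrow> 'r::comm_ring_1) set \<Rightarrow> bool" where
  "anticommutative G S \<longleftrightarrow>
     (\<forall>a \<in> S. \<forall>b \<in> S. gr_add (gr_mult G a b) (gr_mult G b a) = (\<lambda>_. 0))"

end

theory Submission
  imports Defs
begin

text \<open>The element \<open>2\<cdot>1\<close> lies in \<open>2\<S>\<^sub>1\<close>, since the identity is symmetric and in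
  \<open>ker \<sigma>\<close>. Anticommutativity applied to \<open>a = b = 2\<cdot>1\<close> gives \<open>2 (2\<cdot>1)\<^sup>2 = 8\<cdot>1 = 0\<close>,
  so \<open>char R\<close> divides 8. As \<open>\<sigma>\<close> is nontrivial, \<open>R\<close> is not the zero ring, so
  \<open>char R \<noteq> 1\<close>; and \<open>char R \<noteq> 2\<close> by hypothesis.\<close>

lemma (in group) involution_one:
  assumes "is_involution G star"
  shows "star \<one> = \<one>"
proof -
  have star_one: "star \<one> \<in> carrier G"
    using assms unfolding is_involution_def by blast
  have "star \<one> \<otimes> star \<one> = star (\<one> \<otimes> \<one>)"
    using assms unfolding is_involution_def by (metis one_closed)
  also have "\<dots> = star \<one> \<otimes> \<one>"
    using star_one by simp
  finally show ?thesis
    using star_one by (metis l_cancel_one' one_closed)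
qed

lemma gr_mult_smult_basis:
  assumes "x \<in> carrier G" "y \<in> carrier G"
  shows "gr_mult G (gr_smult c (gr_basis x)) (gr_smult d (gr_basis y))
           = gr_smult (c * d) (gr_basis (x \<otimes>\<^bsub>G\<^esub> y))"
proof
  fix z
  let ?a = "gr_smult c (gr_basis x)" and ?b = "gr_smult d (gr_basis y)"
  have "{(u, v). u \<in> carrier G \<and> v \<in> carrier G \<and> ?a u \<noteq> 0 \<and> ?b v \<noteq> 0 \<and> u \<otimes>\<^bsub>G\<^esub> v = z}
          = (if c \<noteq> 0 \<and> d \<noteq> 0 \<and> x \<otimes>\<^bsub>G\<^esub> y = z then {(x, y)} else {})"
    using assms by (auto simp: gr_smult_def gr_basis_def)
  then show "gr_mult G ?a ?b z = gr_smult (c * d) (gr_basis (x \<otimes>\<^bsub>G\<^esub> y)) z"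
    by (auto simp: gr_mult_def gr_smult_def gr_basis_def)
qed

lemma two_basis_one_in_S_set:
  assumes "group G" "is_involution G star"
    and "\<forall>x \<in> carrier G. \<sigma> (x \<otimes>\<^bsub>G\<^esub> star x) = 1"
  shows "gr_smult 2 (gr_basis \<one>\<^bsub>G\<^esub>) \<in> S_set G star \<sigma>"
proof -
  interpret group G by fact
  have "star \<one>\<^bsub>G\<^esub> = \<one>\<^bsub>G\<^esub>"
    using assms(2) by (rule involution_one)
  moreover then have "\<sigma> \<one>\<^bsub>G\<^esub> = 1"
    using assms(3) by (metis one_closed l_one)
  ultimately have "gr_smult 2 (gr_basis \<one>\<^bsub>G\<^esub>) \<in> S_gens G star \<sigma>"
    unfolding S_gens_def sym_elems_def ker_sigma_def by auto
  then show ?thesis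
    unfolding S_set_def by (rule gr_span.gen)
qed

lemma nat_dvd_8_cases:
  assumes "(c::nat) dvd 8"
  shows "c \<in> {1, 2, 4, 8}"
proof -
  have "c \<le> 8"
    using assms by (simp add: dvd_imp_le)
  then have "c \<in> {0, 1, 2, 3, 4, 5, 6, 7, 8}"
    by auto
  then show ?thesis
    using assms by auto
qed

lemma CHAR_eq_1_iff: "CHAR('a::comm_ring_1) = 1 \<longleftrightarrow> (1::'a) = 0"
  using of_nat_eq_0_iff_char_dvd[where n = 1 and 'a = 'a] by simp

theorem lemma3p2:
  fixes G :: "('g, 'b) monoid_scheme"
    and star :: "'g \<Rightarrow> 'g"
    and \<sigma> :: "'g \<Rightarrow> 'r::comm_ring_1"
  assumes "group G"
    and "CHAR('r) \<noteq> 2"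
    and "is_involution G star"
    and "unit_hom G \<sigma>"
    and "\<exists>x \<in> carrier G. \<sigma> x \<noteq> 1"
    and "\<forall>x \<in> carrier G. \<sigma> (x \<otimes>\<^bsub>G\<^esub> star x) = 1"
    and "anticommutative G (S_set G star \<sigma>)"
  shows "CHAR('r) = 4 \<or> CHAR('r) = 8"
proof -
  interpret group G by fact
  define a :: "'g \<Rightarrow> 'r" where "a = gr_smult 2 (gr_basis \<one>\<^bsub>G\<^esub>)"
  have "a \<in> S_set G star \<sigma>"
    unfolding a_def using assms(1,3,6) by (rule two_basis_one_in_S_set)
  then have "gr_add (gr_mult G a a) (gr_mult G a a) \<one>\<^bsub>G\<^esub> = 0"
    using assms(7) unfolding anticommutative_def by simp
  moreover have "gr_mult G a a = gr_smult 4 (gr_basis \<one>\<^bsub>G\<^esub>)"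
    unfolding a_def by (simp add: gr_mult_smult_basis)
  ultimately have "of_nat 8 = (0::'r)"
    by (simp add: gr_add_def gr_smult_def gr_basis_def)
  then have "CHAR('r) \<in> {1, 2, 4, 8}"
    by (simp only: of_nat_eq_0_iff_char_dvd nat_dvd_8_cases)
  moreover have "CHAR('r) \<noteq> 1"
    using assms(5) by (metis CHAR_eq_1_iff mult_1 mult_zero_left)
  ultimately show ?thesis
    using assms(2) by auto
qed

end
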